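(* An algebra $(A,\circ,-,\sqcup)$ is a minus-algebra with override if and only if it satisfies all the defining laws of a minus-algebra with override except the quasi-identity $s-x=t-x\ \&\ x\circ s=x\circ t\Rightarrow s=t$, together with the identity $x=(y\circ x)\sqcup(x-y)$. Hence the class of minus-algebras with override is a finitely based variety, and so is the class of minus-semigroups with override (obtained by further adding an associative operation $\cdot$ and the identity $s(t-u)=st-su$).
   Context: A minus-algebra $(A,\circ,-)$ satisfies: $x\circ y=y-(y-x)$; $(A,\circ)$ is a right normal band (semigroup with $x\circ x=x$, $(x\circ y)\circ z=(y\circ x)\circ z$); there is an element $0$ with $x-x=0$ for all $x$; $x\circ0=0\circ x=0$; $(x-y)\circ x=x-y$; $(x-y)\circ y=0$; $(x-y)\circ z=(x\circ z)-y$; and the quasi-identity $s-x=t-x\ \&\ x\circ s=x\circ t\Rightarrow s=t$. A minus-algebra with override is a minus-algebra with a binary operation $\sqcup$ satisfying $(x\sqcup y)-x=y-x$ and $x\circ(x\sqcup y)=x$. A minus-semigroup with override is a minus-algebra with override with an associative operation $\cdot$ (juxtaposition) satisfying $s(t-u)=st-su$. *)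

theory Defs
  imports Main
begin

text \<open>An algebra is given on the whole of a type 'a by its operations:
  c = composition (circ), m = minus, j = override (sqcup), p = multiplication.\<close>

definition minus_algebra_laws :: "('a \<Rightarrow> 'a \<Rightarrow> 'a) \<Rightarrow> ('a \<Rightarrow> 'a \<Rightarrow> 'a) \<Rightarrow> bool" where
  "minus_algebra_laws c m \<longleftrightarrow>
     (\<forall>x y. c x y = m y (m y x)) \<and>
     (\<forall>x y z. c (c x y) z = c x (c y z)) \<and>
     (\<forall>x. c x x = x) \<and>
     (\<forall>x y z. c (c x y) z = c (c y x) z) \<and>
     (\<exists>e. (\<forall>x. m x x = e) \<and>
          (\<forall>x. c x e = e \<and> c e x = e) \<and>
          (\<forall>x y. c (m x y) x = m x y) \<and>
          (\<forall>x y. c (m x y) y = e) \<and>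
          (\<forall>x y z. c (m x y) z = m (c x z) y))"

definition minus_quasi_identity :: "('a \<Rightarrow> 'a \<Rightarrow> 'a) \<Rightarrow> ('a \<Rightarrow> 'a \<Rightarrow> 'a) \<Rightarrow> bool" where
  "minus_quasi_identity c m \<longleftrightarrow>
     (\<forall>s t x. m s x = m t x \<and> c x s = c x t \<longrightarrow> s = t)"

definition minus_algebra :: "('a \<Rightarrow> 'a \<Rightarrow> 'a) \<Rightarrow> ('a \<Rightarrow> 'a \<Rightarrow> 'a) \<Rightarrow> bool" where
  "minus_algebra c m \<longleftrightarrow> minus_algebra_laws c m \<and> minus_quasi_identity c m"

definition override_laws ::
  "('a \<Rightarrow> 'a \<Rightarrow> 'a) \<Rightarrow> ('a \<Rightarrow> 'a \<Rightarrow> 'a) \<Rightarrow> ('a \<Rightarrow> 'a \<Rightarrow> 'a) \<Rightarrow> bool" where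
  "override_laws c m j \<longleftrightarrow>
     (\<forall>x y. m (j x y) x = m y x) \<and> (\<forall>x y. c x (j x y) = x)"

definition minus_algebra_with_override ::
  "('a \<Rightarrow> 'a \<Rightarrow> 'a) \<Rightarrow> ('a \<Rightarrow> 'a \<Rightarrow> 'a) \<Rightarrow> ('a \<Rightarrow> 'a \<Rightarrow> 'a) \<Rightarrow> bool" where
  "minus_algebra_with_override c m j \<longleftrightarrow> minus_algebra c m \<and> override_laws c m j"

definition semigroup_minus_laws ::
  "('a \<Rightarrow> 'a \<Rightarrow> 'a) \<Rightarrow> ('a \<Rightarrow> 'a \<Rightarrow> 'a) \<Rightarrow> bool" where
  "semigroup_minus_laws m p \<longleftrightarrow>
     (\<forall>x y z. p (p x y) z = p x (p y z)) \<and>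
     (\<forall>s t u. p s (m t u) = m (p s t) (p s u))"

definition minus_semigroup_with_override ::
  "('a \<Rightarrow> 'a \<Rightarrow> 'a) \<Rightarrow> ('a \<Rightarrow> 'a \<Rightarrow> 'a) \<Rightarrow> ('a \<Rightarrow> 'a \<Rightarrow> 'a) \<Rightarrow> ('a \<Rightarrow> 'a \<Rightarrow> 'a) \<Rightarrow> bool" where
  "minus_semigroup_with_override c m j p \<longleftrightarrow>
     minus_algebra_with_override c m j \<and> semigroup_minus_laws m p"

end

theory Submission
  imports Defs
begin

(* The identity
   x = (y \<circ> x) \<squnion> (x - y) rebuilds x from x - y and y \<circ> x, so it implies the
   quasi-identity. Conversely, in a minus-algebra with override both sides of the identity
   have the same difference with y \<circ> x and the same restriction by y \<circ> x, so the
   quasi-identity at y \<circ> x proves it. *)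

lemma right_normal_band_left_absorb:
  assumes assoc: "\<And>x y z. c (c x y) z = c x (c y z)"
    and idem: "\<And>x. c x x = x"
    and normal: "\<And>x y z. c (c x y) z = c (c y x) z"
  shows "c x (c y x) = c y x"
proof -
  have "c x (c y x) = c (c x y) x" by (simp add: assoc)
  also have "\<dots> = c (c y x) x" by (rule normal)
  also have "\<dots> = c y x" by (simp add: assoc idem)
  finally show ?thesis .
qed

lemma minus_algebra_laws_minus_circ:
  assumes "minus_algebra_laws c m"
  shows "m x (c y x) = m x y" and "m (m x y) (c y x) = m x y"
proof -
  have circ_def: "\<And>x y. c x y = m y (m y x)"
    and assoc: "\<And>x y z. c (c x y) z = c x (c y z)"
    and idem: "\<And>x. c x x = x"
    and normal: "\<And>x y z. c (c x y) z = c (c y x) z"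
    and minus_circ_left: "\<And>x y. c (m x y) x = m x y"
    and circ_minus: "\<And>x y z. c (m x y) z = m (c x z) y"
    using assms unfolding minus_algebra_laws_def by blast+
  show minus_circ: "m x (c y x) = m x y"
  proof -
    have "m x (c y x) = m x (m x (m x y))" by (simp only: circ_def)
    also have "\<dots> = c (m x y) x" by (rule circ_def[symmetric])
    also have "\<dots> = m x y" by (rule minus_circ_left)
    finally show ?thesis .
  qed
  have circ_minus_right: "c x (m x y) = m x y"
    using right_normal_band_left_absorb[OF assoc idem normal, of x "m x y"]
    by (simp add: minus_circ_left)
  have "m (m x y) (c y x) = m (c x (m x y)) (c y x)" by (simp add: circ_minus_right)
  also have "\<dots> = c (m x (c y x)) (m x y)" by (simp add: circ_minus)
  also have "\<dots> = m x y" by (simp add: minus_circ idem)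
  finally show "m (m x y) (c y x) = m x y" .
qed

lemma minus_algebra_with_override_split:
  assumes "minus_algebra_with_override c m j"
  shows "x = j (c y x) (m x y)"
proof -
  have laws: "minus_algebra_laws c m"
    and quasi: "\<And>s t x. m s x = m t x \<Longrightarrow> c x s = c x t \<Longrightarrow> s = t"
    and override_minus: "\<And>x y. m (j x y) x = m y x"
    and circ_override: "\<And>x y. c x (j x y) = x"
    using assms unfolding minus_algebra_with_override_def minus_algebra_def
      minus_quasi_identity_def override_laws_def by blast+
  have assoc: "\<And>x y z. c (c x y) z = c x (c y z)" and idem: "\<And>x. c x x = x"
    using laws unfolding minus_algebra_laws_def by blast+
  show ?thesis
  proof (rule quasi)
    show "m x (c y x) = m (j (c y x) (m x y)) (c y x)"
      by (simp add: override_minus minus_algebra_laws_minus_circ[OF laws])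
    have "c (c y x) x = c y x" by (simp add: assoc idem)
    then show "c (c y x) x = c (c y x) (j (c y x) (m x y))" by (simp add: circ_override)
  qed
qed

lemma minus_quasi_identity_if_split:
  assumes split: "\<forall>x y. x = j (c y x) (m x y)"
  shows "minus_quasi_identity c m"
  unfolding minus_quasi_identity_def
proof (intro allI impI)
  fix s t x
  assume same_data: "m s x = m t x \<and> c x s = c x t"
  have "s = j (c x s) (m s x)" by (rule split[rule_format])
  also have "\<dots> = j (c x t) (m t x)" using same_data by simp
  also have "\<dots> = t" by (rule split[rule_format, symmetric])
  finally show "s = t" .
qed

lemma minus_algebra_with_override_iff_split:
  "minus_algebra_with_override c m j \<longleftrightarrow>
     minus_algebra_laws c m \<and> override_laws c m j \<and> (\<forall>x y. x = j (c y x) (m x y))"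
proof
  assume ma: "minus_algebra_with_override c m j"
  then have "\<forall>x y. x = j (c y x) (m x y)"
    by (intro allI minus_algebra_with_override_split)
  with ma show "minus_algebra_laws c m \<and> override_laws c m j \<and> (\<forall>x y. x = j (c y x) (m x y))"
    unfolding minus_algebra_with_override_def minus_algebra_def by (intro conjI) simp_all
next
  assume "minus_algebra_laws c m \<and> override_laws c m j \<and> (\<forall>x y. x = j (c y x) (m x y))"
  then show "minus_algebra_with_override c m j"
    unfolding minus_algebra_with_override_def minus_algebra_def
    by (elim conjE) (intro conjI minus_quasi_identity_if_split; assumption)
qed

theorem proposition5p4:
  fixes c m j p :: "'a \<Rightarrow> 'a \<Rightarrow> 'a"
  shows "(minus_algebra_with_override c m j \<longleftrightarrow>
            minus_algebra_laws c m \<and> override_laws c m j \<and>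
            (\<forall>x y. x = j (c y x) (m x y)))
       \<and> (minus_semigroup_with_override c m j p \<longleftrightarrow>
            minus_algebra_laws c m \<and> override_laws c m j \<and>
            (\<forall>x y. x = j (c y x) (m x y)) \<and> semigroup_minus_laws m p)"
  unfolding minus_semigroup_with_override_def minus_algebra_with_override_iff_split
  by (simp only: conj_assoc simp_thms)

end
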